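(* Let $R$ be a commutative ring with identity, let $(S,\leq)$ be a strictly ordered monoid in which $\leq$ is a total order, and let $w\in S$. Let $P_w:[[R^{S,\leq}]]\to[[R^{S,\leq}]]$ be given by $P_w(f)(s)=f(s)$ if $s<w$ and $P_w(f)(s)=0$ otherwise, and set $B_w=\{(u,v)\in S\times S: u<w,\ v<w,\ u+v\not<w\}$. Then $([[R^{S,\leq}]],P_w)$ is a Rota-Baxter algebra (of weight $-1$) if and only if $w\geq 0$ and $B_w=\emptyset$.
   Context: All monoids are commutative and written additively with neutral element $0$. A partially ordered set is artinian if every strictly decreasing sequence is finite, and narrow if every subset of pairwise incomparable elements is finite. A strictly ordered monoid is a commutative monoid $S$ with a partial order $\leq$ such that $s<s'$ implies $s+t<s'+t$ for all $s,s',t\in S$. The ring of generalized power series $[[R^{S,\leq}]]$ is the set of maps $f:S\to R$ with artinian and narrow support $\{s: f(s)\neq 0\}$, with pointwise addition and convolution $(fg)(s)=\sum f(u)g(v)$ over the finitely many pairs $(u,v)$ with $u+v=s$, $f(u)\neq0$, $g(v)\neq0$. A Rota-Baxter algebra (of weight $-1$) is an associative $R$-algebra $A$ with an $R$-linear $P:A\to A$ satisfying $P(x)P(y)=P(xP(y))+P(P(x)y)-P(xy)$ for all $x,y\in A$. *)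

theory Defs
  imports Main
begin

definition artinian :: "'a::order set \<Rightarrow> bool" where
  "artinian A \<longleftrightarrow> \<not> (\<exists>f::nat \<Rightarrow> 'a. \<forall>n. f n \<in> A \<and> f (Suc n) < f n)"

definition narrow :: "'a::order set \<Rightarrow> bool" where
  "narrow A \<longleftrightarrow> (\<forall>B \<subseteq> A. (\<forall>x\<in>B. \<forall>y\<in>B. x \<noteq> y \<longrightarrow> \<not> x \<le> y \<and> \<not> y \<le> x) \<longrightarrow> finite B)"

definition support :: "('a \<Rightarrow> 'r::zero) \<Rightarrow> 'a set" where
  "support f = {s. f s \<noteq> 0}"

definition gps :: "('a::order \<Rightarrow> 'r::zero) set" where
  "gps = {f. artinian (support f) \<and> narrow (support f)}"

definition gps_mult :: "('a::plus \<Rightarrow> 'r::comm_ring_1) \<Rightarrow> ('a \<Rightarrow> 'r) \<Rightarrow> 'a \<Rightarrow> 'r" where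
  "gps_mult f g s = (\<Sum>(u,v) \<in> {(u,v). u + v = s \<and> f u \<noteq> 0 \<and> g v \<noteq> 0}. f u * g v)"

definition P_op :: "'a::order \<Rightarrow> ('a \<Rightarrow> 'r::zero) \<Rightarrow> 'a \<Rightarrow> 'r" where
  "P_op w f = (\<lambda>s. if s < w then f s else 0)"

definition B_set :: "'a::{order,plus} \<Rightarrow> ('a \<times> 'a) set" where
  "B_set w = {(u,v). u < w \<and> v < w \<and> \<not> (u + v < w)}"

definition rota_baxter ::
  "('a \<Rightarrow> 'r::comm_ring_1) set \<Rightarrow> (('a \<Rightarrow> 'r) \<Rightarrow> ('a \<Rightarrow> 'r) \<Rightarrow> ('a \<Rightarrow> 'r))
    \<Rightarrow> (('a \<Rightarrow> 'r) \<Rightarrow> ('a \<Rightarrow> 'r)) \<Rightarrow> bool" where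
  "rota_baxter A mult P \<longleftrightarrow>
     (\<forall>x\<in>A. P x \<in> A) \<and>
     (\<forall>x\<in>A. \<forall>y\<in>A. P (\<lambda>s. x s + y s) = (\<lambda>s. P x s + P y s)) \<and>
     (\<forall>r. \<forall>x\<in>A. P (\<lambda>s. r * x s) = (\<lambda>s. r * P x s)) \<and>
     (\<forall>x\<in>A. \<forall>y\<in>A.
        mult (P x) (P y) = (\<lambda>s. P (mult x (P y)) s + P (mult (P x) y) s - P (mult x y) s))"

end

theory Submission
  imports Defs
begin

text \<open>Evaluating the Rota-Baxter identity of \<open>P_w\<close> at a coefficient \<open>s\<close> gives a sum over the
finitely many pairs \<open>(u, v)\<close> with \<open>u + v = s\<close>, and it holds termwise as soon as, with
\<open>\<chi>\<close> the indicator of \<open>{..<w}\<close>, the scalar identity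
\<open>\<chi> u \<chi> v = \<chi> (u + v) (\<chi> u + \<chi> v - 1)\<close> holds for all \<open>u, v\<close>. Testing the operator identity on
monomials shows that this scalar identity is also necessary. It says precisely that both
\<open>{..<w}\<close> and its complement \<open>{w..}\<close> are closed under addition; for the first this is
\<open>B_w = {}\<close>, and for the second, by strict monotonicity of addition, it is \<open>0 \<le> w\<close>.\<close>

lemma artinian_subset: "artinian A \<Longrightarrow> B \<subseteq> A \<Longrightarrow> artinian B"
  unfolding artinian_def by blast

lemma narrow_subset: "narrow A \<Longrightarrow> B \<subseteq> A \<Longrightarrow> narrow B"
  unfolding narrow_def by (meson subset_trans)

definition noetherian :: "'a::order set \<Rightarrow> bool" where
  "noetherian A \<longleftrightarrow> \<not> (\<exists>f::nat \<Rightarrow> 'a. \<forall>n. f n \<in> A \<and> f n < f (Suc n))"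

lemma artinian_iff_wf: "artinian A \<longleftrightarrow> wf {(x, y). x \<in> A \<and> y \<in> A \<and> x < y}"
  unfolding artinian_def wf_iff_no_infinite_down_chain by auto

lemma noetherian_iff_wf: "noetherian A \<longleftrightarrow> wf {(x, y). x \<in> A \<and> y \<in> A \<and> y < x}"
  unfolding noetherian_def wf_iff_no_infinite_down_chain by auto

lemma artinian_has_minimal:
  assumes "artinian A" "X \<subseteq> A" "x \<in> X"
  shows "\<exists>m\<in>X. \<forall>y\<in>X. \<not> y < m"
  using wf_eq_minimal[THEN iffD1, OF assms(1)[unfolded artinian_iff_wf], rule_format, OF assms(3)]
    assms(2) by blast

lemma noetherian_has_maximal:
  assumes "noetherian A" "X \<subseteq> A" "x \<in> X"
  shows "\<exists>m\<in>X. \<forall>y\<in>X. \<not> m < y"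
  using wf_eq_minimal[THEN iffD1, OF assms(1)[unfolded noetherian_iff_wf], rule_format, OF assms(3)]
    assms(2) by blast

lemma finite_if_artinian_noetherian:
  fixes U :: "'a::linorder set"
  assumes art: "artinian U" and noeth: "noetherian U"
  shows "finite U"
proof -
  have initial_segments_finite: "finite {x\<in>U. x \<le> u}" if "u \<in> U" for u
  proof (rule ccontr)
    assume "infinite {x\<in>U. x \<le> u}"
    then obtain m where m: "m \<in> U" "infinite {x\<in>U. x \<le> m}"
      and m_min: "\<And>y. y \<in> U \<Longrightarrow> infinite {x\<in>U. x \<le> y} \<Longrightarrow> \<not> y < m"
      using artinian_has_minimal[OF art, of "{y\<in>U. infinite {x\<in>U. x \<le> y}}" u] \<open>u \<in> U\<close>
      by blast
    show False
    proof (cases "\<exists>x\<in>U. x < m")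
      case False
      then have "{x\<in>U. x \<le> m} = {m}" using m(1) by force
      then show False using m(2) by simp
    next
      case True
      then obtain M where M: "M \<in> U" "M < m" and M_max: "\<And>x. x \<in> U \<Longrightarrow> x < m \<Longrightarrow> \<not> M < x"
        using noetherian_has_maximal[OF noeth, of "{x\<in>U. x < m}"] by blast
      have "{x\<in>U. x \<le> m} = insert m {x\<in>U. x \<le> M}"
        using M M_max m(1) by (auto simp: not_less)
      moreover have "finite {x\<in>U. x \<le> M}" using m_min M by auto
      ultimately show False using m(2) by simp
    qed
  qed
  show ?thesis
  proof (cases "U = {}")
    case False
    then obtain M where "M \<in> U" "\<And>x. x \<in> U \<Longrightarrow> \<not> M < x"
      using noetherian_has_maximal[OF noeth, of U] by blast
    then have "U = {x\<in>U. x \<le> M}" by (auto simp: not_less)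
    then show ?thesis using initial_segments_finite[OF \<open>M \<in> U\<close>] by simp
  qed simp
qed

lemma add_left_strict_mono:
  fixes u v v' :: "'a::{order, comm_monoid_add}"
  assumes strict: "\<And>s s' t :: 'a. s < s' \<Longrightarrow> s + t < s' + t"
    and "v < v'"
  shows "u + v < u + v'"
  using strict[OF \<open>v < v'\<close>, of u] by (simp add: add.commute)

lemma add_left_mono_of_strict:
  fixes u v v' :: "'a::{order, comm_monoid_add}"
  assumes strict: "\<And>s s' t :: 'a. s < s' \<Longrightarrow> s + t < s' + t"
    and "v \<le> v'"
  shows "u + v \<le> u + v'"
  using add_left_strict_mono[OF strict, of v v' u] \<open>v \<le> v'\<close>
  by (cases "v = v'") (auto simp: order_less_imp_le)

lemma add_eq_partner_antitone:
  fixes u u' v v' :: "'a::{linorder, comm_monoid_add}"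
  assumes strict: "\<And>s s' t :: 'a. s < s' \<Longrightarrow> s + t < s' + t"
    and "u + v = u' + v'" "u < u'"
  shows "v' < v"
proof (rule ccontr)
  assume "\<not> v' < v"
  then have "u' + v \<le> u' + v'" using add_left_mono_of_strict[OF strict] by simp
  moreover have "u + v < u' + v" using strict \<open>u < u'\<close> by blast
  ultimately show False using \<open>u + v = u' + v'\<close> by simp
qed

lemma add_left_cancel_of_strict:
  fixes u v v' :: "'a::{linorder, comm_monoid_add}"
  assumes strict: "\<And>s s' t :: 'a. s < s' \<Longrightarrow> s + t < s' + t"
    and "u + v = u + v'"
  shows "v = v'"
  using add_left_strict_mono[OF strict, of v v' u] add_left_strict_mono[OF strict, of v' v u]
    \<open>u + v = u + v'\<close> by (cases v v' rule: linorder_cases) auto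

text \<open>The first components of the pairs are noetherian because the second components,
which lie in an artinian support, decrease along them.\<close>

lemma finite_convolution_pairs:
  fixes f g :: "'a::{linorder, comm_monoid_add} \<Rightarrow> 'r::zero"
  assumes strict: "\<And>s s' t :: 'a. s < s' \<Longrightarrow> s + t < s' + t"
    and art_f: "artinian (support f)" and art_g: "artinian (support g)"
  shows "finite {(u, v). u + v = s \<and> f u \<noteq> 0 \<and> g v \<noteq> 0}"
proof -
  define F where "F = {(u, v). u + v = s \<and> f u \<noteq> 0 \<and> g v \<noteq> 0}"
  have F_iff: "(u, v) \<in> F \<longleftrightarrow> u + v = s \<and> u \<in> support f \<and> v \<in> support g" for u v
    by (simp add: F_def support_def)
  have inj: "inj_on fst F"
  proof (rule inj_onI)
    fix p q assume "p \<in> F" "q \<in> F" "fst p = fst q"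
    then obtain u v v' where pq: "p = (u, v)" "q = (u, v')" "u + v = u + v'"
      by (cases p, cases q) (auto simp: F_iff)
    then show "p = q" using add_left_cancel_of_strict[OF strict pq(3)] by simp
  qed
  have "noetherian (fst ` F)"
    unfolding noetherian_def
  proof
    assume "\<exists>h::nat \<Rightarrow> 'a. \<forall>n. h n \<in> fst ` F \<and> h n < h (Suc n)"
    then obtain h where h: "\<And>n. h n \<in> fst ` F" "\<And>n. h n < h (Suc n)" by blast
    have "\<forall>n. \<exists>v. (h n, v) \<in> F"
      using h(1) by (metis imageE prod.collapse)
    then obtain k where k: "\<And>n. (h n, k n) \<in> F" by metis
    have "k n \<in> support g \<and> k (Suc n) < k n" for n
      using k[of n] k[of "Suc n"] add_eq_partner_antitone[OF strict _ h(2)[of n], of "k n" "k (Suc n)"]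
      by (simp add: F_iff)
    then have "\<exists>k. \<forall>n. k n \<in> support g \<and> k (Suc n) < k n" by blast
    with art_g show False unfolding artinian_def by (rule notE)
  qed
  moreover have "artinian (fst ` F)"
    by (rule artinian_subset[OF art_f]) (auto simp: F_iff)
  ultimately have "finite (fst ` F)"
    by (intro finite_if_artinian_noetherian)
  with inj show ?thesis
    unfolding F_def by (rule finite_imageD[rotated])
qed

lemma gps_mult_eq_sum:
  assumes "finite F" "\<And>u v. (u, v) \<in> F \<Longrightarrow> u + v = s"
    and "\<And>u v. u + v = s \<Longrightarrow> f u \<noteq> 0 \<Longrightarrow> g v \<noteq> 0 \<Longrightarrow> (u, v) \<in> F"
  shows "gps_mult f g s = (\<Sum>(u, v)\<in>F. f u * g v)"
  unfolding gps_mult_def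
proof (rule sum.mono_neutral_left[OF \<open>finite F\<close>])
  show "{(u, v). u + v = s \<and> f u \<noteq> 0 \<and> g v \<noteq> 0} \<subseteq> F"
    using assms(3) by blast
  show "\<forall>p\<in>F - {(u, v). u + v = s \<and> f u \<noteq> 0 \<and> g v \<noteq> 0}. (case p of (u, v) \<Rightarrow> f u * g v) = 0"
    using assms(2) by fastforce
qed

lemma support_P_op: "support (P_op w f) \<subseteq> support f"
  unfolding support_def P_op_def by auto

lemma P_op_in_gps:
  assumes "f \<in> gps"
  shows "P_op w f \<in> gps"
proof -
  have "artinian (support f)" "narrow (support f)"
    using assms by (simp_all add: gps_def)
  then have "artinian (support (P_op w f))" "narrow (support (P_op w f))"
    using artinian_subset narrow_subset support_P_op by meson+
  then show ?thesis by (simp add: gps_def)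
qed

definition gps_monomial :: "'r::zero \<Rightarrow> 'a \<Rightarrow> 'a \<Rightarrow> 'r" where
  "gps_monomial c a = (\<lambda>s. if s = a then c else 0)"

lemma gps_monomial_in_gps: "gps_monomial c a \<in> gps"
proof -
  have "artinian {a}"
    unfolding artinian_def by (metis less_irrefl singletonD)
  moreover have "narrow {a}"
    unfolding narrow_def by (metis finite.emptyI finite.insertI finite_subset)
  moreover have "support (gps_monomial c a) \<subseteq> {a}"
    unfolding support_def gps_monomial_def by auto
  ultimately show ?thesis
    unfolding gps_def using artinian_subset narrow_subset by blast
qed

lemma P_op_gps_monomial: "P_op w (gps_monomial c a) = gps_monomial (if a < w then c else 0) a"
  unfolding P_op_def gps_monomial_def by auto

lemma gps_mult_gps_monomial:
  fixes a b :: "'a::comm_monoid_add"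
  shows "gps_mult (gps_monomial c a) (gps_monomial d b) (a + b) = (c * d :: 'r::comm_ring_1)"
  by (subst gps_mult_eq_sum[where F = "{(a, b)}"]) (auto simp: gps_monomial_def split: if_splits)

definition add_closed :: "'a::plus set \<Rightarrow> bool" where
  "add_closed A \<longleftrightarrow> (\<forall>u\<in>A. \<forall>v\<in>A. u + v \<in> A)"

lemma add_closed_lessThan_iff: "add_closed {..<w} \<longleftrightarrow> B_set w = {}"
  unfolding add_closed_def B_set_def by auto

lemma add_closed_atLeast_iff:
  fixes w :: "'a::{linorder, comm_monoid_add}"
  assumes strict: "\<And>s s' t :: 'a. s < s' \<Longrightarrow> s + t < s' + t"
  shows "add_closed {w..} \<longleftrightarrow> 0 \<le> w"
proof
  assume closed: "add_closed {w..}"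
  show "0 \<le> w"
  proof (rule ccontr)
    assume "\<not> 0 \<le> w"
    then have "w + w < 0 + w" using strict[of w 0 w] by simp
    moreover have "w + w \<in> {w..}" using closed by (simp add: add_closed_def)
    ultimately show False by simp
  qed
next
  assume "0 \<le> w"
  have "w \<le> u + v" if "w \<le> u" "w \<le> v" for u v
    using add_left_mono_of_strict[OF strict, of 0 v u] \<open>0 \<le> w\<close> that by (simp add: order_trans)
  then show "add_closed {w..}" by (simp add: add_closed_def)
qed

lemma P_op_mult_P_op:
  fixes w :: "'a::{linorder, plus}"
  assumes "add_closed {..<w}" "add_closed {w..}"
  shows "P_op w x u * P_op w y v =
    (if u + v < w then x u * P_op w y v + P_op w x u * y v - x u * y v else (0::'r::comm_ring_1))"
proof -
  have "u < w \<Longrightarrow> v < w \<Longrightarrow> u + v < w" "\<not> u < w \<Longrightarrow> \<not> v < w \<Longrightarrow> \<not> u + v < w"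
    using assms unfolding add_closed_def by (auto simp: not_less)
  then show ?thesis unfolding P_op_def by (auto simp: not_less)
qed

lemma P_op_rota_baxter_identity:
  fixes x y :: "'a::{linorder, comm_monoid_add} \<Rightarrow> 'r::comm_ring_1"
  assumes strict: "\<And>s s' t :: 'a. s < s' \<Longrightarrow> s + t < s' + t"
    and closed: "add_closed {..<w}" "add_closed {w..}"
    and "x \<in> gps" "y \<in> gps"
  shows "gps_mult (P_op w x) (P_op w y) s =
    P_op w (gps_mult x (P_op w y)) s + P_op w (gps_mult (P_op w x) y) s - P_op w (gps_mult x y) s"
proof -
  define F where "F = {(u, v). u + v = s \<and> x u \<noteq> 0 \<and> y v \<noteq> 0}"
  have "finite F"
    unfolding F_def using \<open>x \<in> gps\<close> \<open>y \<in> gps\<close>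
    by (intro finite_convolution_pairs[OF strict]) (simp_all add: gps_def)
  then have mult_eq_sum: "gps_mult f g s = (\<Sum>(u, v)\<in>F. f u * g v)"
    if "support f \<subseteq> support x" "support g \<subseteq> support y" for f g :: "'a \<Rightarrow> 'r"
    using that by (intro gps_mult_eq_sum) (auto simp: F_def support_def)
  have "gps_mult (P_op w x) (P_op w y) s = (\<Sum>(u, v)\<in>F. P_op w x u * P_op w y v)"
    using mult_eq_sum support_P_op by blast
  also have "\<dots> = (\<Sum>(u, v)\<in>F.
      if s < w then x u * P_op w y v + P_op w x u * y v - x u * y v else 0)"
    by (intro sum.cong) (auto simp: F_def P_op_mult_P_op[OF closed])
  also have "\<dots> = P_op w (gps_mult x (P_op w y)) s + P_op w (gps_mult (P_op w x) y) s
      - P_op w (gps_mult x y) s"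
    using mult_eq_sum[OF subset_refl support_P_op] mult_eq_sum[OF support_P_op subset_refl]
      mult_eq_sum[OF subset_refl subset_refl]
    by (simp add: P_op_def sum.distrib sum_subtractf case_prod_unfold)
  finally show ?thesis .
qed

lemma rota_baxter_P_op_if_add_closed:
  fixes w :: "'a::{linorder, comm_monoid_add}"
  assumes strict: "\<And>s s' t :: 'a. s < s' \<Longrightarrow> s + t < s' + t"
    and "add_closed {..<w}" "add_closed {w..}"
  shows "rota_baxter (gps :: ('a \<Rightarrow> 'r::comm_ring_1) set) gps_mult (P_op w)"
proof -
  have linear: "P_op w (\<lambda>s. x s + y s) = (\<lambda>s. P_op w x s + P_op w y s)"
    "P_op w (\<lambda>s. r * x s) = (\<lambda>s. r * P_op w x s)" for x y :: "'a \<Rightarrow> 'r" and r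
    by (auto simp: P_op_def)
  have "gps_mult (P_op w x) (P_op w y) =
      (\<lambda>s. P_op w (gps_mult x (P_op w y)) s + P_op w (gps_mult (P_op w x) y) s - P_op w (gps_mult x y) s)"
    if "x \<in> gps" "y \<in> gps" for x y :: "'a \<Rightarrow> 'r"
    by (rule ext) (rule P_op_rota_baxter_identity[OF assms that])
  then show ?thesis
    unfolding rota_baxter_def by (simp add: P_op_in_gps linear)
qed

lemma add_closed_if_rota_baxter:
  fixes w :: "'a::{linorder, comm_monoid_add}"
  assumes nontriv: "(1::'r::comm_ring_1) \<noteq> 0"
    and rb: "rota_baxter (gps :: ('a \<Rightarrow> 'r) set) gps_mult (P_op w)"
  shows "add_closed {..<w} \<and> add_closed {w..}"
proof -
  have rota_baxter_identity: "gps_mult (P_op w x) (P_op w y) =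
      (\<lambda>s. P_op w (gps_mult x (P_op w y)) s + P_op w (gps_mult (P_op w x) y) s - P_op w (gps_mult x y) s)"
    if "x \<in> gps" "y \<in> gps" for x y :: "'a \<Rightarrow> 'r"
    using rb that unfolding rota_baxter_def by blast
  let ?\<chi> = "\<lambda>a. if a < w then 1 else (0::'r)"
  have indicator_identity: "?\<chi> a * ?\<chi> b = (if a + b < w then ?\<chi> b + ?\<chi> a - 1 else 0)" for a b
  proof -
    let ?m = "gps_monomial (1::'r)"
    have "gps_mult (P_op w (?m a)) (P_op w (?m b)) (a + b)
      = P_op w (gps_mult (?m a) (P_op w (?m b))) (a + b)
        + P_op w (gps_mult (P_op w (?m a)) (?m b)) (a + b)
        - P_op w (gps_mult (?m a) (?m b)) (a + b)"
      using fun_cong[OF rota_baxter_identity[OF gps_monomial_in_gps gps_monomial_in_gps]] .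
    then show ?thesis
      unfolding P_op_gps_monomial unfolding P_op_def gps_mult_gps_monomial
      by (cases "a + b < w") simp_all
  qed
  have "a + b < w" if "a < w" "b < w" for a b
    using indicator_identity[of a b] that nontriv by (auto split: if_splits)
  moreover have "\<not> a + b < w" if "\<not> a < w" "\<not> b < w" for a b
    using indicator_identity[of a b] that nontriv by (auto split: if_splits)
  ultimately show ?thesis
    unfolding add_closed_def by (auto simp: not_less)
qed

theorem corollary3p2:
  fixes w :: "'a::{linorder, comm_monoid_add}"
  assumes nontriv: "(1::'r::comm_ring_1) \<noteq> 0"
    and strict: "\<And>s s' t :: 'a. s < s' \<Longrightarrow> s + t < s' + t"
  shows "rota_baxter (gps :: ('a \<Rightarrow> 'r) set) gps_mult (P_op w)
           \<longleftrightarrow> (0 \<le> w \<and> B_set w = {})"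
proof -
  have "rota_baxter (gps :: ('a \<Rightarrow> 'r) set) gps_mult (P_op w)
      \<longleftrightarrow> add_closed {..<w} \<and> add_closed {w..}"
    using add_closed_if_rota_baxter[OF nontriv] rota_baxter_P_op_if_add_closed[OF strict] by blast
  then show ?thesis
    using add_closed_lessThan_iff add_closed_atLeast_iff[OF strict] by blast
qed

end
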